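(* Let $n\ge 3$ and let $A_1\ldots A_n$ be a regular $n$-gon in the coordinate plane. Let $f(x)$ be a real polynomial of degree $n$ whose roots, counted with multiplicity, are the abscissas of $A_1,\ldots,A_n$ (i.e. $f(x)=c\prod_{j=1}^n (x-x(A_j))$, $c\neq 0$). Then every root of $f$ has multiplicity at most $2$, $f'$ has $n-1$ distinct real roots, and if $l_1,\ldots,l_{n-1}$ are the vertical lines through these roots, then the leftmost and the rightmost of these lines are tangent to the circle inscribed in $A_1\ldots A_n$. Equivalently, if $O=(o,\cdot)$ is the center and $r$ the inradius of the polygon, then the smallest root of $f'$ is $o-r$ and the largest is $o+r$.
   Context: "Vertical" means parallel to the ordinate axis; $x(P)$ denotes the abscissa of a point $P$. *)

theory Defs
  imports Complex_Main "HOL-Computational_Algebra.Polynomial"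
begin

definition regular_polygon :: "nat \<Rightarrow> (nat \<Rightarrow> real \<times> real) \<Rightarrow> real \<times> real \<Rightarrow> real \<Rightarrow> bool" where
  "regular_polygon n A c R \<longleftrightarrow> R > 0 \<and>
     (\<exists>\<theta>::real. \<exists>s\<in>{-1, 1::real}. \<forall>j\<in>{1..n}.
        A j = (fst c + R * cos (\<theta> + s * 2 * pi * real j / real n),
               snd c + R * sin (\<theta> + s * 2 * pi * real j / real n)))"

definition inradius :: "nat \<Rightarrow> real \<Rightarrow> real" where
  "inradius n R = R * cos (pi / real n)"

end

theory Submission
  imports Defs
begin

text \<open>Put the vertex abscissas in the form \<open>x(c) + R cos(\<theta> + 2\<pi>j/n)\<close>. The factorisation
  \<open>z\<^sup>n - w\<^sup>n = \<Prod>\<^sub>k (z - w \<zeta>\<^sup>k)\<close> over the \<open>n\<close>-th roots of unity, read through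
  \<open>cos \<phi> = (z + z\<^sup>-\<^sup>1)/2\<close>, gives \<open>\<Prod>\<^sub>j (cos \<phi> - cos(\<theta> + 2\<pi>j/n)) = (cos n\<phi> - cos n\<theta>) / 2\<^sup>n\<^sup>-\<^sup>1\<close>.
  So \<open>f(x(c) + R cos \<phi>)\<close> is a multiple of \<open>cos n\<phi> - cos n\<theta>\<close>, whose derivative in \<open>\<phi>\<close>
  vanishes at \<open>\<phi> = k\<pi>/n\<close>; since \<open>sin \<phi> \<noteq> 0\<close> there for \<open>0 < k < n\<close>, the \<open>n - 1\<close> distinct
  points \<open>x(c) + R cos(k\<pi>/n)\<close> are roots of \<open>f'\<close>, which has degree \<open>n - 1\<close>. They are therefore
  all its roots, all simple (so roots of \<open>f\<close> have multiplicity at most 2), and the extreme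
  ones are \<open>x(c) \<plusminus> R cos(\<pi>/n)\<close>.\<close>

lemma prod_diff_roots_of_unity:
  assumes n: "n > 0"
  shows "(\<Prod>k<n. y - cis (2 * pi * real k / real n)) = y ^ n - 1"
proof -
  let ?\<zeta> = "\<lambda>k. cis (2 * pi * real k / real n)"
  define p where "p = (\<Prod>k<n. [:- ?\<zeta> k, 1:])"
  define q where "q = monom (1::complex) n - 1"
  have bij: "bij_betw ?\<zeta> {..<n} {z. z ^ n = 1}"
    by (rule bij_betw_roots_unity[OF n])
  have deg_p: "degree p = n"
    unfolding p_def by (subst degree_prod_sum_eq) auto
  have lead_p: "lead_coeff p = 1"
    unfolding p_def lead_coeff_prod by simp
  have "p = q"
  proof (rule poly_eqI_degree_lead_coeff[where A = "?\<zeta> ` {..<n}" and n = n])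
    show "coeff p n = coeff q n"
      using deg_p lead_p n by (simp add: q_def)
    show "n \<le> card (?\<zeta> ` {..<n})"
      using bij card_roots_unity_eq[OF n] by (simp add: bij_betw_def)
    show "degree p \<le> n" "degree q \<le> n"
      using deg_p n by (auto simp: q_def intro!: degree_diff_le order.trans[OF degree_monom_le])
  next
    fix z assume "z \<in> ?\<zeta> ` {..<n}"
    then obtain k where k: "k < n" "z = ?\<zeta> k" by auto
    hence "poly p z = 0" by (auto simp: p_def poly_prod intro!: prod_zero)
    moreover have "z ^ n = 1" using bij k by (auto simp: bij_betw_def)
    ultimately show "poly p z = poly q z" by (simp add: q_def poly_monom)
  qed
  hence "poly p y = poly q y" by simp
  thus ?thesis by (simp add: p_def q_def poly_prod poly_monom)
qed

lemma prod_diff_scaled_roots_of_unity: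
  assumes n: "n > 0"
  shows "(\<Prod>k<n. z - w * cis (2 * pi * real k / real n)) = z ^ n - w ^ n"
proof (cases "w = 0")
  case True
  thus ?thesis using n by (simp add: power_0_left)
next
  case False
  have "(\<Prod>k<n. z - w * cis (2 * pi * real k / real n))
      = (\<Prod>k<n. w * (z / w - cis (2 * pi * real k / real n)))"
    using False by (intro prod.cong) (auto simp: field_simps)
  also have "\<dots> = w ^ n * ((z / w) ^ n - 1)"
    by (simp add: prod.distrib prod_diff_roots_of_unity[OF n])
  also have "\<dots> = z ^ n - w ^ n"
    using False by (simp add: field_simps power_divide)
  finally show ?thesis .
qed

lemma cis_2pi_of_nat_mod:
  assumes "n > 0"
  shows "cis (2 * pi * real (j mod n) / real n) = cis (2 * pi * real j / real n)"
proof -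
  have j: "real j = real n * real (j div n) + real (j mod n)"
    by (simp flip: of_nat_mult of_nat_add)
  have "2 * pi * real j / real n = 2 * pi * real (j mod n) / real n + 2 * pi * real (j div n)"
    using assms by (subst j) (simp add: field_simps)
  hence "cis (2 * pi * real j / real n) = cis (2 * pi * real (j mod n) / real n) * cis (2 * pi * real (j div n))"
    by (simp only: cis_mult)
  thus ?thesis by simp
qed

lemma cis_2pi_of_nat_diff:
  assumes "j \<le> n" "n > 0"
  shows "cis (2 * pi * real (n - j) / real n) = cis (- 2 * pi * real j / real n)"
proof -
  have "2 * pi * real (n - j) / real n = - 2 * pi * real j / real n + 2 * pi * real (1::nat)"
    using assms by (simp add: of_nat_diff field_simps)
  thus ?thesis by (simp only: cis_mult[symmetric] cis_multiple_2pi Ints_of_nat mult_1_right)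
qed

lemma prod_diff_cis_regular:
  assumes n: "n > 0" and s: "s \<in> {-1, 1::real}"
  shows "(\<Prod>j=1..n. z - cis (\<theta> + s * 2 * pi * real j / real n)) = z ^ n - cis \<theta> ^ n"
proof -
  let ?h = "\<lambda>k. z - cis \<theta> * cis (2 * pi * real k / real n)"
  have "(\<Prod>j=1..n. z - cis (\<theta> + s * 2 * pi * real j / real n)) = (\<Prod>k<n. ?h k)"
  proof (cases "s = 1")
    case True
    show ?thesis
    proof (rule prod.reindex_bij_witness[of _ "\<lambda>k. if k = 0 then n else k" "\<lambda>j. j mod n"])
      fix j assume "j \<in> {1..n}"
      thus "(if j mod n = 0 then n else j mod n) = j" "j mod n \<in> {..<n}"
        by (auto simp: le_less)
      show "?h (j mod n) = z - cis (\<theta> + s * 2 * pi * real j / real n)"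
        using True n by (simp add: cis_2pi_of_nat_mod cis_mult)
    qed (use n in auto)
  next
    case False
    with s have "s = -1" by auto
    show ?thesis
    proof (rule prod.reindex_bij_witness[of _ "\<lambda>k. n - k" "\<lambda>j. n - j"])
      fix j assume j: "j \<in> {1..n}"
      thus "n - (n - j) = j" "n - j \<in> {..<n}" by auto
      have "j \<le> n" using j by simp
      show "?h (n - j) = z - cis (\<theta> + s * 2 * pi * real j / real n)"
        unfolding cis_2pi_of_nat_diff[OF \<open>j \<le> n\<close> n] cis_mult using \<open>s = -1\<close> by simp
    qed auto
  qed
  also have "\<dots> = z ^ n - cis \<theta> ^ n"
    by (rule prod_diff_scaled_roots_of_unity[OF n])
  finally show ?thesis .
qed

lemma cos_diff_eq_cis:
  "complex_of_real (cos a - cos b) = (cis a - cis b) * (cis a * cis b - 1) / (2 * cis a * cis b)"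
proof -
  have cos_cis: "complex_of_real (cos x) = (cis x + inverse (cis x)) / 2" for x
    by (simp add: complex_eq_iff)
  show ?thesis unfolding of_real_diff cos_cis by (simp add: field_simps)
qed

lemma
  fixes u :: "'b \<Rightarrow> 'a::field"
  assumes roots: "\<And>x. (\<Prod>j\<in>I. x - u j) = x ^ n - W" and card: "card I = n" and n: "n > 0"
  shows prod_of_roots_of_binomial: "(\<Prod>j\<in>I. u j) = - ((-1) ^ n * W)"
    and prod_mult_diff_one_of_roots_of_binomial: "(\<Prod>j\<in>I. z * u j - 1) = (-1) ^ n * (1 - z ^ n * W)"
proof -
  show "(\<Prod>j\<in>I. u j) = - ((-1) ^ n * W)"
    using prod_uminus[of "\<lambda>j. 0 - u j" I] roots[of 0] card n
    by (simp add: power_mult_distrib[symmetric] power_0_left)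
  show "(\<Prod>j\<in>I. z * u j - 1) = (-1) ^ n * (1 - z ^ n * W)"
  proof (cases "z = 0")
    case True
    thus ?thesis using card n by (simp add: power_0_left)
  next
    case False
    have "(\<Prod>j\<in>I. z * u j - 1) = (\<Prod>j\<in>I. - z * (inverse z - u j))"
      using False by (intro prod.cong) (auto simp: field_simps)
    also have "\<dots> = (- z) ^ n * (inverse z ^ n - W)"
      using card by (simp only: prod.distrib roots prod_constant)
    also have "\<dots> = (-1) ^ n * (z ^ n * inverse z ^ n - z ^ n * W)"
      by (simp only: power_minus[of z] right_diff_distrib mult_ac)
    also have "\<dots> = (-1) ^ n * (1 - z ^ n * W)"
      using False by (simp add: power_inverse)
    finally show ?thesis .
  qed
qed

lemma prod_cos_diff_regular:
  assumes n: "n > 0" and s: "s \<in> {-1, 1::real}"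
  shows "(\<Prod>j=1..n. cos \<phi> - cos (\<theta> + s * 2 * pi * real j / real n))
          = (cos (real n * \<phi>) - cos (real n * \<theta>)) / 2 ^ (n - 1)"
proof -
  define z where "z = cis \<phi>"
  define w where "w = cis \<theta>"
  define u where "u = (\<lambda>j. cis (\<theta> + s * 2 * pi * real j / real n))"
  have roots: "\<And>x. (\<Prod>j=1..n. x - u j) = x ^ n - w ^ n"
    unfolding u_def w_def by (rule prod_diff_cis_regular[OF n s])
  have card: "card {1..n} = n" by simp
  have nonzero: "z \<noteq> 0" "w \<noteq> 0" "(-1::complex) ^ n \<noteq> 0" by (auto simp: z_def w_def)
  have two_pow: "(2::complex) ^ n = 2 * 2 ^ (n - 1)"
    using n by (cases n) auto
  have "complex_of_real (\<Prod>j=1..n. cos \<phi> - cos (\<theta> + s * 2 * pi * real j / real n))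
      = (\<Prod>j=1..n. (z - u j) * (z * u j - 1) / (2 * z * u j))"
    unfolding of_real_prod cos_diff_eq_cis z_def u_def ..
  also have "\<dots> = (\<Prod>j=1..n. z - u j) * (\<Prod>j=1..n. z * u j - 1) / (2 ^ n * z ^ n * (\<Prod>j=1..n. u j))"
    by (simp add: prod.distrib prod_dividef)
  also have "\<dots> = (z ^ n - w ^ n) * ((-1) ^ n * (1 - z ^ n * w ^ n)) / (2 ^ n * z ^ n * - ((-1) ^ n * w ^ n))"
    unfolding roots prod_of_roots_of_binomial[OF roots card n]
      prod_mult_diff_one_of_roots_of_binomial[OF roots card n] ..
  also have "\<dots> = (z ^ n - w ^ n) * (z ^ n * w ^ n - 1) / (2 * z ^ n * w ^ n) / 2 ^ (n - 1)"
    using nonzero unfolding two_pow by (simp add: field_simps)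
  also have "\<dots> = complex_of_real ((cos (real n * \<phi>) - cos (real n * \<theta>)) / 2 ^ (n - 1))"
    unfolding of_real_divide cos_diff_eq_cis z_def w_def by (simp add: DeMoivre)
  finally show ?thesis by (simp only: of_real_eq_iff)
qed

lemma poly_prod_abscissas_regular_polygon:
  assumes "regular_polygon n A c R" "n > 0"
  obtains \<theta> where "\<And>\<phi>. poly (\<Prod>j=1..n. [:- fst (A j), 1:]) (fst c + R * cos \<phi>)
                    = R ^ n / 2 ^ (n - 1) * (cos (real n * \<phi>) - cos (real n * \<theta>))"
proof -
  obtain \<theta> s where s: "s \<in> {-1, 1::real}"
    and A: "\<And>j. j \<in> {1..n} \<Longrightarrow> fst (A j) = fst c + R * cos (\<theta> + s * 2 * pi * real j / real n)"
    using assms(1) unfolding regular_polygon_def by fastforce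
  have "poly (\<Prod>j=1..n. [:- fst (A j), 1:]) (fst c + R * cos \<phi>)
        = R ^ n / 2 ^ (n - 1) * (cos (real n * \<phi>) - cos (real n * \<theta>))" for \<phi>
  proof -
    have "poly (\<Prod>j=1..n. [:- fst (A j), 1:]) (fst c + R * cos \<phi>)
        = (\<Prod>j=1..n. R * (cos \<phi> - cos (\<theta> + s * 2 * pi * real j / real n)))"
      unfolding poly_prod by (intro prod.cong) (auto simp: A algebra_simps)
    also have "\<dots> = R ^ n * (\<Prod>j=1..n. cos \<phi> - cos (\<theta> + s * 2 * pi * real j / real n))"
      by (simp add: prod.distrib)
    also have "\<dots> = R ^ n * ((cos (real n * \<phi>) - cos (real n * \<theta>)) / 2 ^ (n - 1))"
      unfolding prod_cos_diff_regular[OF assms(2) s] ..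
    finally show ?thesis by simp
  qed
  thus thesis by (rule that)
qed

lemma poly_pderiv_eq_0_at_cos_node:
  fixes p :: "real poly"
  assumes p: "\<And>\<phi>. poly p (x0 + R * cos \<phi>) = K * (cos (real n * \<phi>) - C)"
    and R: "R \<noteq> 0" and k: "0 < k" "k < n"
  shows "poly (pderiv p) (x0 + R * cos (real k * pi / real n)) = 0"
proof -
  define \<phi> where "\<phi> = real k * pi / real n"
  have "((\<lambda>\<phi>. poly p (x0 + R * cos \<phi>)) has_real_derivative
          poly (pderiv p) (x0 + R * cos \<phi>) * (R * - sin \<phi>)) (at \<phi>)"
    by (rule DERIV_chain2[OF poly_DERIV]) (auto intro!: derivative_eq_intros)
  moreover have "((\<lambda>\<phi>. poly p (x0 + R * cos \<phi>)) has_real_derivative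
          K * (- sin (real n * \<phi>) * real n)) (at \<phi>)"
    unfolding p by (auto intro!: derivative_eq_intros)
  ultimately have "poly (pderiv p) (x0 + R * cos \<phi>) * (R * - sin \<phi>) = K * (- sin (real n * \<phi>) * real n)"
    by (rule DERIV_unique)
  moreover have "sin (real n * \<phi>) = 0"
    using k by (simp add: \<phi>_def sin_npi)
  moreover have "sin \<phi> > 0"
    unfolding \<phi>_def using k by (intro sin_gt_zero) (auto simp: field_simps)
  ultimately show ?thesis
    using R by (simp add: \<phi>_def)
qed

lemma of_nat_mult_pi_div_le_pi:
  assumes "k \<le> n"
  shows "real k * pi / real n \<le> pi"
proof (cases "n = 0")
  case False
  have "real k * pi \<le> real n * pi" using assms by (intro mult_right_mono) auto
  thus ?thesis using False by (simp add: divide_le_eq)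
qed simp

lemma inj_on_cos_nodes:
  assumes "R \<noteq> 0" "n > 0"
  shows "inj_on (\<lambda>k. x0 + R * cos (real k * pi / real n)) {..n}"
proof (rule inj_onI)
  fix k l assume kl: "k \<in> {..n}" "l \<in> {..n}"
    and "x0 + R * cos (real k * pi / real n) = x0 + R * cos (real l * pi / real n)"
  hence "cos (real k * pi / real n) = cos (real l * pi / real n)"
    using assms by simp
  hence "real k * pi / real n = real l * pi / real n"
    using kl by - (rule cos_inj_pi, auto intro: of_nat_mult_pi_div_le_pi)
  thus "k = l" using assms by simp
qed

lemma cos_nodes_antimono:
  assumes "0 \<le> R" "k \<le> l" "l \<le> n"
  shows "x0 + R * cos (real l * pi / real n) \<le> x0 + R * cos (real k * pi / real n)"
proof -
  have "cos (real l * pi / real n) \<le> cos (real k * pi / real n)"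
    using assms by (intro cos_monotone_0_pi_le of_nat_mult_pi_div_le_pi divide_right_mono) auto
  thus ?thesis using assms(1) by (simp add: mult_left_mono)
qed

lemma
  assumes "0 \<le> R" "2 \<le> n"
  shows Max_cos_nodes: "Max ((\<lambda>k. x0 + R * cos (real k * pi / real n)) ` {1..n-1}) = x0 + R * cos (pi / real n)"
    and Min_cos_nodes: "Min ((\<lambda>k. x0 + R * cos (real k * pi / real n)) ` {1..n-1}) = x0 - R * cos (pi / real n)"
proof -
  have "cos (real (n - 1) * pi / real n) = - cos (pi / real n)"
  proof -
    have "real (n - 1) * pi / real n = pi - pi / real n"
      using assms by (simp add: of_nat_diff field_simps)
    thus ?thesis by simp
  qed
  hence last: "x0 + R * cos (real (n - 1) * pi / real n) = x0 - R * cos (pi / real n)"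
    by simp
  show "Max ((\<lambda>k. x0 + R * cos (real k * pi / real n)) ` {1..n-1}) = x0 + R * cos (pi / real n)"
    using assms cos_nodes_antimono[OF assms(1), of 1 _ n x0]
    by (intro Max_eqI) (auto intro!: image_eqI[where x = 1])
  show "Min ((\<lambda>k. x0 + R * cos (real k * pi / real n)) ` {1..n-1}) = x0 - R * cos (pi / real n)"
    using assms cos_nodes_antimono[OF assms(1), of _ "n - 1" n x0]
    by (intro Min_eqI) (auto simp flip: last intro!: image_eqI[where x = "n - 1"])
qed

lemma poly_roots_eq_if_degree_le_card:
  fixes q :: "'a::{comm_ring_1,ring_no_zero_divisors} poly"
  assumes "q \<noteq> 0" "finite S" "S \<subseteq> {x. poly q x = 0}" "degree q \<le> card S"
  shows "{x. poly q x = 0} = S"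
  using assms card_poly_roots_bound[OF assms(1)] card_mono[OF poly_roots_finite[OF assms(1)] assms(3)]
  by (intro card_subset_eq[symmetric] poly_roots_finite) auto

lemma order_le_1_if_card_roots_eq_degree:
  fixes p :: "'a::idom poly"
  assumes p: "p \<noteq> 0" and card: "card {x. poly p x = 0} = degree p"
  shows "order x p \<le> 1"
proof (rule ccontr)
  assume "\<not> order x p \<le> 1"
  hence "[:-x, 1:] ^ 2 dvd p" using order_divides by fastforce
  then obtain q where q: "p = [:-x, 1:] ^ 2 * q" by (auto simp: dvd_def)
  have q0: "q \<noteq> 0" using p q by auto
  have "card {x. poly p x = 0} \<le> card (insert x {x. poly q x = 0})"
    using poly_roots_finite[OF q0] by (intro card_mono) (auto simp: q)
  also have "\<dots> \<le> Suc (card {x. poly q x = 0})"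
    by (rule card_insert_le_m1) auto
  also have "card {x. poly q x = 0} \<le> degree q"
    by (rule card_poly_roots_bound[OF q0])
  finally show False
    using card q q0 by (simp add: degree_mult_eq degree_power_eq)
qed

lemma order_le_2_if_card_pderiv_roots_eq_degree:
  fixes p :: "'a::{idom,semiring_char_0} poly"
  assumes p': "pderiv p \<noteq> 0" and card: "card {x. poly (pderiv p) x = 0} = degree (pderiv p)"
  shows "order x p \<le> 2"
proof (cases "poly p x = 0")
  case True
  have "p \<noteq> 0" using p' by auto
  thus ?thesis
    using order_pderiv[OF _ True] order_le_1_if_card_roots_eq_degree[OF p' card, of x] by simp
next
  case False
  thus ?thesis by (simp add: order_root)
qed

theorem theorem1:
  fixes n :: nat and A :: "nat \<Rightarrow> real \<times> real" and c :: "real \<times> real" and R a :: real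
    and f :: "real poly"
  assumes "n \<ge> 3"
    and "regular_polygon n A c R"
    and "a \<noteq> 0"
    and "f = smult a (\<Prod>j=1..n. [:- fst (A j), 1:])"
  shows "(\<forall>x. order x f \<le> 2)
       \<and> card {x. poly (pderiv f) x = 0} = n - 1
       \<and> Min {x. poly (pderiv f) x = 0} = fst c - inradius n R
       \<and> Max {x. poly (pderiv f) x = 0} = fst c + inradius n R"
proof -
  have n: "n > 0" and R: "R > 0" using assms(1,2) by (auto simp: regular_polygon_def)
  obtain \<theta> where "\<And>\<phi>. poly (\<Prod>j=1..n. [:- fst (A j), 1:]) (fst c + R * cos \<phi>)
                    = R ^ n / 2 ^ (n - 1) * (cos (real n * \<phi>) - cos (real n * \<theta>))"
    using poly_prod_abscissas_regular_polygon[OF assms(2) n] by blast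
  hence f_on_circle: "\<And>\<phi>. poly f (fst c + R * cos \<phi>)
                    = a * R ^ n / 2 ^ (n - 1) * (cos (real n * \<phi>) - cos (real n * \<theta>))"
    by (simp add: assms(4))
  have "degree f = n" using assms(3,4) by (simp add: degree_prod_sum_eq)
  hence f': "pderiv f \<noteq> 0" "degree (pderiv f) = n - 1"
    using n by (simp_all add: pderiv_eq_0_iff degree_pderiv)
  define nodes where "nodes = (\<lambda>k. fst c + R * cos (real k * pi / real n)) ` {1..n-1}"
  have card_nodes: "card nodes = n - 1"
    unfolding nodes_def using inj_on_cos_nodes[OF _ n, of R "fst c"] R
    by (subst card_image) (auto elim!: inj_on_subset)
  have roots: "{x. poly (pderiv f) x = 0} = nodes"
    using f' card_nodes poly_pderiv_eq_0_at_cos_node[OF f_on_circle] R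
    by (intro poly_roots_eq_if_degree_le_card) (auto simp: nodes_def)
  show ?thesis
    using order_le_2_if_card_pderiv_roots_eq_degree[of f] f' card_nodes R assms(1)
      Min_cos_nodes[of R n "fst c"] Max_cos_nodes[of R n "fst c"]
    unfolding roots nodes_def inradius_def by auto
qed

end
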